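(* In the Poisson-gamma DNN model with h-likelihood $h$ as in the context, fix $\boldsymbol\theta=(\mathbf w,\boldsymbol\beta,\lambda)$ with $\lambda>0$, and let $\mu_{i+}=\sum_{j=1}^{q_i}\mu_{ij}^m$. Then: (i) $h(\boldsymbol\theta,\cdot)$ has a unique maximizer $\widetilde{\mathbf v}=(\widetilde v_1,\dots,\widetilde v_n)$ over $\mathbb R^n$, given by $\widetilde v_i=\log\dfrac{y_{i+}+\lambda^{-1}}{\mu_{i+}+\lambda^{-1}}$; this is also the maximizer of $\mathbf v\mapsto\log f_{\boldsymbol\theta}(\mathbf v\mid\mathbf y)$; (ii) $h(\boldsymbol\theta,\widetilde{\mathbf v})=\ell(\boldsymbol\theta;\mathbf y)$, where $\ell(\boldsymbol\theta;\mathbf y)=\log\int\exp\{\ell_e(\boldsymbol\theta,\mathbf v)\}\,d\mathbf v$ is the marginal log-likelihood; consequently $(\widehat{\boldsymbol\theta},\widehat{\mathbf v})$ maximizes $h$ jointly if and only if $\widehat{\boldsymbol\theta}$ maximizes $\ell(\cdot;\mathbf y)$ and $\widehat{\mathbf v}=\widetilde{\mathbf v}(\widehat{\boldsymbol\theta})$; (iii) $\exp(\widetilde v_i)=E(u_i\mid\mathbf y_i)$ and $\exp(\widetilde v_i)\mu_{ij}^m=E(\mu_{ij}^c\mid\mathbf y)$, where $\mathbf y_i=(y_{i1},\dots,y_{iq_i})$.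
   Context: Data: counts $y_{ij}\in\{0,1,2,\dots\}$ with input vectors $\mathbf x_{ij}\in\mathbb R^p$, for subjects $i=1,\dots,n$ and $j=1,\dots,q_i$. Neural network predictor: $\mathrm{NN}(\mathbf x;\mathbf w,\boldsymbol\beta)=\sum_{k=1}^{p_L}g_k(\mathbf x;\mathbf w)\beta_k+\beta_0$, where $g_k(\cdot;\mathbf w)$ are arbitrary functions (last hidden layer nodes) parametrized by $\mathbf w$, and $\boldsymbol\beta=(\beta_0,\dots,\beta_{p_L})$. Marginal mean $\mu_{ij}^m=\exp\{\mathrm{NN}(\mathbf x_{ij};\mathbf w,\boldsymbol\beta)\}$. Poisson-gamma DNN: $u_1,\dots,u_n$ i.i.d. $\mathrm{Gamma}(\lambda^{-1},\lambda^{-1})$ (shape $\lambda^{-1}$, rate $\lambda^{-1}$, so $E u_i=1$, $\mathrm{var}\,u_i=\lambda$), $v_i=\log u_i$, and conditionally on $\mathbf u$ the $y_{ij}$ are independent with $y_{ij}\mid u_i\sim\mathrm{Poisson}(\mu_{ij}^c)$, $\mu^c_{ij}=\mu^m_{ij}u_i=\exp\{\mathrm{NN}(\mathbf x_{ij};\mathbf w,\boldsymbol\beta)+v_i\}$. Fixed parameters $\boldsymbol\theta=(\mathbf w,\boldsymbol\beta,\lambda)$. Extended likelihood $\ell_e(\boldsymbol\theta,\mathbf v)=\sum_{i,j}\log f_{\boldsymbol\theta}(y_{ij}\mid v_i)+\sum_i\log f_{\boldsymbol\theta}(v_i)$, where $f_{\boldsymbol\theta}(y_{ij}\mid v_i)$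 is the Poisson pmf with mean $\mu_{ij}^c$ and $f_{\boldsymbol\theta}(v_i)$ is the density of $v_i=\log u_i$, i.e. $\log f_{\boldsymbol\theta}(v_i)=(v_i-e^{v_i})/\lambda-\lambda^{-1}\log\lambda-\log\Gamma(\lambda^{-1})$. With $y_{i+}=\sum_{j=1}^{q_i}y_{ij}$, let $c_i(\lambda;y_{i+})=(y_{i+}+\lambda^{-1})+\log\Gamma(y_{i+}+\lambda^{-1})-(y_{i+}+\lambda^{-1})\log(y_{i+}+\lambda^{-1})$. The h-likelihood is $h(\boldsymbol\theta,\mathbf v)=\ell_e(\boldsymbol\theta,\mathbf v)+\sum_{i=1}^n c_i(\lambda;y_{i+})$. *)

theory Defs
  imports "HOL-Analysis.Analysis"
begin

text \<open>Subjects are indexed by a finite type 'n (n = CARD('n)),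
  observations of subject i by j < q i. Inputs live in real^'p. The last hidden layer nodes
  are arbitrary functions g k x w (k = 1..pL) parametrised by w :: 'w.\<close>

type_synonym ('w) param = "'w \<times> (nat \<Rightarrow> real) \<times> real"

definition NN :: "(nat \<Rightarrow> real^'p \<Rightarrow> 'w \<Rightarrow> real) \<Rightarrow> nat \<Rightarrow> real^'p \<Rightarrow> 'w \<Rightarrow> (nat \<Rightarrow> real) \<Rightarrow> real" where
  "NN g pL x w \<beta> = (\<Sum>k=1..pL. g k x w * \<beta> k) + \<beta> 0"

definition mu_m :: "(nat \<Rightarrow> real^'p \<Rightarrow> 'w \<Rightarrow> real) \<Rightarrow> nat \<Rightarrow> ('n \<Rightarrow> nat \<Rightarrow> real^'p) \<Rightarrow> 'w param \<Rightarrow> 'n \<Rightarrow> nat \<Rightarrow> real" where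
  "mu_m g pL xs \<theta> i j = (case \<theta> of (w, \<beta>, lam) \<Rightarrow> exp (NN g pL (xs i j) w \<beta>))"

definition mu_c :: "(nat \<Rightarrow> real^'p \<Rightarrow> 'w \<Rightarrow> real) \<Rightarrow> nat \<Rightarrow> ('n \<Rightarrow> nat \<Rightarrow> real^'p) \<Rightarrow> 'w param \<Rightarrow> 'n \<Rightarrow> nat \<Rightarrow> real \<Rightarrow> real" where
  "mu_c g pL xs \<theta> i j t = (case \<theta> of (w, \<beta>, lam) \<Rightarrow> exp (NN g pL (xs i j) w \<beta> + t))"

definition poisson_pmf_val :: "real \<Rightarrow> nat \<Rightarrow> real" where
  "poisson_pmf_val \<mu> k = exp (- \<mu>) * \<mu> ^ k / fact k"

text \<open>log density of v = log u, u ~ Gamma(shape 1/lambda, rate 1/lambda)\<close>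
definition log_f_v :: "real \<Rightarrow> real \<Rightarrow> real" where
  "log_f_v lam t = (t - exp t) / lam - (1 / lam) * ln lam - ln (Gamma (1 / lam))"

definition yplus :: "('n \<Rightarrow> nat) \<Rightarrow> ('n \<Rightarrow> nat \<Rightarrow> nat) \<Rightarrow> 'n \<Rightarrow> real" where
  "yplus q y i = (\<Sum>j<q i. real (y i j))"

definition mu_plus :: "(nat \<Rightarrow> real^'p \<Rightarrow> 'w \<Rightarrow> real) \<Rightarrow> nat \<Rightarrow> ('n \<Rightarrow> nat) \<Rightarrow> ('n \<Rightarrow> nat \<Rightarrow> real^'p) \<Rightarrow> 'w param \<Rightarrow> 'n \<Rightarrow> real" where
  "mu_plus g pL q xs \<theta> i = (\<Sum>j<q i. mu_m g pL xs \<theta> i j)"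

definition ell_e_i :: "(nat \<Rightarrow> real^'p \<Rightarrow> 'w \<Rightarrow> real) \<Rightarrow> nat \<Rightarrow> ('n \<Rightarrow> nat) \<Rightarrow> ('n \<Rightarrow> nat \<Rightarrow> nat) \<Rightarrow> ('n \<Rightarrow> nat \<Rightarrow> real^'p) \<Rightarrow> 'w param \<Rightarrow> 'n \<Rightarrow> real \<Rightarrow> real" where
  "ell_e_i g pL q y xs \<theta> i t =
     (\<Sum>j<q i. ln (poisson_pmf_val (mu_c g pL xs \<theta> i j t) (y i j))) + log_f_v (snd (snd \<theta>)) t"

definition ell_e :: "(nat \<Rightarrow> real^'p \<Rightarrow> 'w \<Rightarrow> real) \<Rightarrow> nat \<Rightarrow> ('n::finite \<Rightarrow> nat) \<Rightarrow> ('n \<Rightarrow> nat \<Rightarrow> nat) \<Rightarrow> ('n \<Rightarrow> nat \<Rightarrow> real^'p) \<Rightarrow> 'w param \<Rightarrow> real^'n \<Rightarrow> real" where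
  "ell_e g pL q y xs \<theta> v =
     (\<Sum>i\<in>UNIV. \<Sum>j<q i. ln (poisson_pmf_val (mu_c g pL xs \<theta> i j (v $ i)) (y i j)))
     + (\<Sum>i\<in>UNIV. log_f_v (snd (snd \<theta>)) (v $ i))"

definition c_adj :: "real \<Rightarrow> real \<Rightarrow> real" where
  "c_adj lam yp = (yp + 1 / lam) + ln (Gamma (yp + 1 / lam)) - (yp + 1 / lam) * ln (yp + 1 / lam)"

definition hlik :: "(nat \<Rightarrow> real^'p \<Rightarrow> 'w \<Rightarrow> real) \<Rightarrow> nat \<Rightarrow> ('n::finite \<Rightarrow> nat) \<Rightarrow> ('n \<Rightarrow> nat \<Rightarrow> nat) \<Rightarrow> ('n \<Rightarrow> nat \<Rightarrow> real^'p) \<Rightarrow> 'w param \<Rightarrow> real^'n \<Rightarrow> real" where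
  "hlik g pL q y xs \<theta> v = ell_e g pL q y xs \<theta> v + (\<Sum>i\<in>UNIV. c_adj (snd (snd \<theta>)) (yplus q y i))"

definition marg_loglik :: "(nat \<Rightarrow> real^'p \<Rightarrow> 'w \<Rightarrow> real) \<Rightarrow> nat \<Rightarrow> ('n::finite \<Rightarrow> nat) \<Rightarrow> ('n \<Rightarrow> nat \<Rightarrow> nat) \<Rightarrow> ('n \<Rightarrow> nat \<Rightarrow> real^'p) \<Rightarrow> 'w param \<Rightarrow> real" where
  "marg_loglik g pL q y xs \<theta> = ln (\<integral>v. exp (ell_e g pL q y xs \<theta> v) \<partial>(lborel :: (real^'n) measure))"

text \<open>log f_theta(v | y) = l_e(theta, v) - l(theta; y)  (Bayes formula)\<close>
definition log_post :: "(nat \<Rightarrow> real^'p \<Rightarrow> 'w \<Rightarrow> real) \<Rightarrow> nat \<Rightarrow> ('n::finite \<Rightarrow> nat) \<Rightarrow> ('n \<Rightarrow> nat \<Rightarrow> nat) \<Rightarrow> ('n \<Rightarrow> nat \<Rightarrow> real^'p) \<Rightarrow> 'w param \<Rightarrow> real^'n \<Rightarrow> real" where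
  "log_post g pL q y xs \<theta> v = ell_e g pL q y xs \<theta> v - marg_loglik g pL q y xs \<theta>"

definition post_exp :: "(nat \<Rightarrow> real^'p \<Rightarrow> 'w \<Rightarrow> real) \<Rightarrow> nat \<Rightarrow> ('n::finite \<Rightarrow> nat) \<Rightarrow> ('n \<Rightarrow> nat \<Rightarrow> nat) \<Rightarrow> ('n \<Rightarrow> nat \<Rightarrow> real^'p) \<Rightarrow> 'w param \<Rightarrow> (real^'n \<Rightarrow> real) \<Rightarrow> real" where
  "post_exp g pL q y xs \<theta> \<phi> =
     (\<integral>v. \<phi> v * exp (ell_e g pL q y xs \<theta> v) \<partial>(lborel :: (real^'n) measure))
     / (\<integral>v. exp (ell_e g pL q y xs \<theta> v) \<partial>(lborel :: (real^'n) measure))"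

text \<open>E(phi(v_i) | y_i): posterior expectation given only subject i's data\<close>
definition post_exp_i :: "(nat \<Rightarrow> real^'p \<Rightarrow> 'w \<Rightarrow> real) \<Rightarrow> nat \<Rightarrow> ('n \<Rightarrow> nat) \<Rightarrow> ('n \<Rightarrow> nat \<Rightarrow> nat) \<Rightarrow> ('n \<Rightarrow> nat \<Rightarrow> real^'p) \<Rightarrow> 'w param \<Rightarrow> 'n \<Rightarrow> (real \<Rightarrow> real) \<Rightarrow> real" where
  "post_exp_i g pL q y xs \<theta> i \<phi> =
     (\<integral>t. \<phi> t * exp (ell_e_i g pL q y xs \<theta> i t) \<partial>lborel)
     / (\<integral>t. exp (ell_e_i g pL q y xs \<theta> i t) \<partial>lborel)"

definition vtilde :: "(nat \<Rightarrow> real^'p \<Rightarrow> 'w \<Rightarrow> real) \<Rightarrow> nat \<Rightarrow> ('n::finite \<Rightarrow> nat) \<Rightarrow> ('n \<Rightarrow> nat \<Rightarrow> nat) \<Rightarrow> ('n \<Rightarrow> nat \<Rightarrow> real^'p) \<Rightarrow> 'w param \<Rightarrow> real^'n" where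
  "vtilde g pL q y xs \<theta> = (\<chi> i. ln ((yplus q y i + 1 / snd (snd \<theta>)) / (mu_plus g pL q xs \<theta> i + 1 / snd (snd \<theta>))))"

definition ParamSpace :: "'w param set" where
  "ParamSpace = {\<theta>. snd (snd \<theta>) > 0}"

end

theory Submission
  imports Defs
begin

text \<open>As a function of \<open>v\<^sub>i\<close>, the extended likelihood is the log-gamma kernel
  \<open>A\<^sub>i v\<^sub>i - B\<^sub>i exp v\<^sub>i + C\<^sub>i\<close> with \<open>A\<^sub>i = y\<^sub>i\<^sub>+ + 1/\<lambda>\<close> and \<open>B\<^sub>i = \<mu>\<^sub>i\<^sub>+ + 1/\<lambda>\<close>.
  So \<open>h\<close> separates over the subjects into strictly concave terms maximised at \<open>log (A\<^sub>i / B\<^sub>i)\<close>.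
  The substitution \<open>u = B\<^sub>i exp t\<close> turns \<open>\<integral> exp (s t + A\<^sub>i t - B\<^sub>i exp t) dt\<close> into
  \<open>\<Gamma>(A\<^sub>i + s) / B\<^sub>i powr (A\<^sub>i + s)\<close>. Hence the marginal likelihood factorises over the subjects,
  \<open>c\<^sub>i\<close> is exactly the gap between the maximum of a kernel and the logarithm of its integral, and
  \<open>E(u\<^sub>i | y)\<close> is the ratio of the integrals for \<open>s = 1\<close> and \<open>s = 0\<close>, i.e. \<open>A\<^sub>i / B\<^sub>i\<close>.
  Finally, maximising \<open>h\<close> jointly amounts to maximising its profile, which is the marginal
  log-likelihood.\<close>

lemma gamma_kernel_has_integral:
  fixes a b :: real
  assumes a: "a > 0" and b: "b > 0"
  shows "((\<lambda>t. exp (a * t - b * exp t)) has_integral Gamma a / b powr a) UNIV"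
proof -
  define f where "f u = u powr (a - 1) / exp u / b powr a" for u :: real
  have "((\<lambda>u. u powr (a - 1) / exp u) has_integral Gamma a) {0<..}"
    using Gamma_integral_real[OF a] has_integral_closure[of "{0::real<..}"] by auto
  then have "(f has_integral Gamma a / b powr a) {0<..}"
    unfolding f_def by (intro has_integral_divide)
  moreover have "range (\<lambda>t. b * exp t) = {0<..}"
  proof (intro equalityI subsetI)
    fix u :: real assume "u \<in> {0<..}"
    then have "u = b * exp (ln (u / b))" using b by simp
    then show "u \<in> range (\<lambda>t. b * exp t)" by blast
  qed (use b in auto)
  moreover have "f u \<ge> 0" if "u > 0" for u using that by (simp add: f_def)
  ultimately have "f absolutely_integrable_on range (\<lambda>t. b * exp t)
      \<and> integral (range (\<lambda>t. b * exp t)) f = Gamma a / b powr a"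
    by (auto simp: has_integral_iff intro: nonnegative_absolutely_integrable_1)
  then have "(\<lambda>t. \<bar>b * exp t\<bar> * f (b * exp t)) absolutely_integrable_on UNIV
      \<and> integral UNIV (\<lambda>t. \<bar>b * exp t\<bar> * f (b * exp t)) = Gamma a / b powr a"
    using b by (subst has_absolute_integral_change_of_variables_1'[where S = UNIV and
          g = "\<lambda>t. b * exp t" and g' = "\<lambda>t. b * exp t"]) (auto intro!: derivative_eq_intros inj_onI)
  moreover have "\<bar>b * exp t\<bar> * f (b * exp t) = exp (a * t - b * exp t)" for t
  proof -
    have "\<bar>b * exp t\<bar> * f (b * exp t) = (b * exp t) powr a / exp (b * exp t) / b powr a"
      using b by (simp add: f_def powr_diff field_simps)
    also have "(b * exp t) powr a = b powr a * exp (a * t)"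
      using b by (simp add: powr_def ln_mult distrib_left exp_add)
    finally show ?thesis
      using b by (simp add: exp_diff)
  qed
  ultimately show ?thesis
    by (auto simp: has_integral_iff dest: set_lebesgue_integral_eq_integral)
qed

lemma nn_integral_gamma_kernel:
  fixes a b :: real
  assumes "a > 0" and "b > 0"
  shows "(\<integral>\<^sup>+t. ennreal (exp (a * t - b * exp t)) \<partial>lborel) = ennreal (Gamma a / b powr a)"
  by (rule nn_integral_has_integral_lborel[OF _ _ gamma_kernel_has_integral[OF assms]]) auto

lemma integral_eq_if_nn_integral_eq:
  fixes f :: "'a::euclidean_space \<Rightarrow> real"
  assumes "f \<in> borel_measurable borel" and "\<And>x. 0 \<le> f x"
    and "(\<integral>\<^sup>+x. ennreal (f x) \<partial>lborel) = ennreal r" and "0 \<le> r"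
  shows "(\<integral>x. f x \<partial>lborel) = r"
  using assms by (subst integral_eq_nn_integral) auto

lemma nn_integral_lborel_vec_prod:
  fixes f :: "'n::finite \<Rightarrow> real \<Rightarrow> ennreal"
  assumes [measurable]: "\<And>i. f i \<in> borel_measurable borel"
  shows "(\<integral>\<^sup>+x. (\<Prod>i\<in>UNIV. f i (x $ i)) \<partial>(lborel::(real^'n) measure))
      = (\<Prod>i\<in>UNIV. \<integral>\<^sup>+t. f i t \<partial>lborel)"
proof -
  define F where "F b = f (THE i. b = axis i (1::real))" for b :: "real^'n"
  have B: "(Basis :: (real^'n) set) = range (\<lambda>i. axis i 1)"
    by (auto simp: Basis_vec_def)
  have inj: "inj (\<lambda>i::'n. axis i (1::real))" by (auto simp: inj_def axis_eq_axis)
  have Fa: "F (axis i 1) = f i" for i unfolding F_def by (auto simp: axis_eq_axis)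
  have "(\<integral>\<^sup>+x. (\<Prod>b\<in>Basis. F b (x \<bullet> b)) \<partial>(lborel::(real^'n) measure))
      = (\<Prod>b\<in>Basis. (\<integral>\<^sup>+x. F b x \<partial>lborel))"
    by (rule nn_integral_lborel_prod) (auto simp: B Fa)
  moreover have "(\<Prod>b\<in>Basis. F b (x \<bullet> b)) = (\<Prod>i\<in>UNIV. f i (x $ i))" for x :: "real^'n"
    unfolding B by (subst prod.reindex[OF inj]) (simp add: Fa cart_eq_inner_axis)
  moreover have "(\<Prod>b\<in>Basis. (\<integral>\<^sup>+x. F b x \<partial>lborel)) = (\<Prod>i\<in>UNIV. \<integral>\<^sup>+t. f i t \<partial>lborel)"
    unfolding B by (subst prod.reindex[OF inj]) (simp add: Fa)
  ultimately show ?thesis by simp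
qed

lemma integral_lborel_vec_prod:
  fixes h :: "'n::finite \<Rightarrow> real \<Rightarrow> real"
  assumes [measurable]: "\<And>i. h i \<in> borel_measurable borel"
    and nonneg: "\<And>i t. 0 \<le> h i t"
    and int_h: "\<And>i. (\<integral>\<^sup>+t. ennreal (h i t) \<partial>lborel) = ennreal (I i)" and I_nonneg: "\<And>i. 0 \<le> I i"
  shows "(\<integral>x. (\<Prod>i\<in>UNIV. h i (x $ i)) \<partial>(lborel::(real^'n) measure)) = (\<Prod>i\<in>UNIV. I i)"
proof (rule integral_eq_if_nn_integral_eq)
  have "(\<integral>\<^sup>+x. ennreal (\<Prod>i\<in>UNIV. h i (x $ i)) \<partial>(lborel::(real^'n) measure))
      = (\<integral>\<^sup>+x. (\<Prod>i\<in>UNIV. ennreal (h i (x $ i))) \<partial>lborel)"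
    using nonneg by (simp add: prod_ennreal)
  also have "\<dots> = (\<Prod>i\<in>UNIV. ennreal (I i))"
    by (subst nn_integral_lborel_vec_prod) (auto simp: int_h)
  finally show "(\<integral>\<^sup>+x. ennreal (\<Prod>i\<in>UNIV. h i (x $ i)) \<partial>(lborel::(real^'n) measure))
      = ennreal (\<Prod>i\<in>UNIV. I i)"
    using I_nonneg by (simp add: prod_ennreal)
qed (use nonneg I_nonneg in \<open>auto intro: prod_nonneg\<close>)

lemma add_one_less_exp:
  fixes x :: real
  assumes "x \<noteq> 0"
  shows "1 + x < exp x"
proof (cases "1 + x / 2 < 0")
  case True
  then show ?thesis using exp_gt_zero[of x] by linarith
next
  case False
  have "(1 + x / 2)\<^sup>2 \<le> exp (x / 2) ^ 2" using False by (intro power_mono) auto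
  also have "\<dots> = exp x" by (simp add: power2_eq_square exp_add[symmetric])
  finally have "1 + x + x\<^sup>2 / 4 \<le> exp x" by (simp add: power2_eq_square field_simps)
  moreover have "x\<^sup>2 > 0" using assms by simp
  ultimately show ?thesis by linarith
qed

lemma gamma_kernel_argmax_iff:
  fixes a b r :: real
  assumes a: "a > 0" and b: "b > 0"
  shows "(\<forall>s. a * s - b * exp s \<le> a * r - b * exp r) \<longleftrightarrow> r = ln (a / b)"
proof -
  define m where "m = ln (a / b)"
  have gap: "(a * m - b * exp m) - (a * s - b * exp s) = a * (exp (s - m) - 1 - (s - m))" for s
  proof -
    have "exp m = a / b" using a b by (simp add: m_def)
    then show ?thesis using a b by (simp add: exp_diff algebra_simps)
  qed
  have le_max: "a * s - b * exp s \<le> a * m - b * exp m" for s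
    using gap[of s] mult_nonneg_nonneg[of a "exp (s - m) - 1 - (s - m)"] a
      exp_ge_add_one_self[of "s - m"] by linarith
  have "a * s - b * exp s < a * m - b * exp m" if "s \<noteq> m" for s
    using gap[of s] mult_pos_pos[of a "exp (s - m) - 1 - (s - m)"] a
      add_one_less_exp[of "s - m"] that by linarith
  then show ?thesis
    using le_max unfolding m_def[symmetric] by (metis not_le)
qed

lemma separable_argmax_iff:
  fixes F :: "'n::finite \<Rightarrow> real \<Rightarrow> real" and m :: "real^'n"
  assumes argmax: "\<And>i r. (\<forall>s. F i s \<le> F i r) \<longleftrightarrow> r = m $ i"
  shows "(\<forall>v'. (\<Sum>i\<in>UNIV. F i (v' $ i)) \<le> (\<Sum>i\<in>UNIV. F i (v $ i))) \<longleftrightarrow> v = m"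
proof
  assume max: "\<forall>v'. (\<Sum>i\<in>UNIV. F i (v' $ i)) \<le> (\<Sum>i\<in>UNIV. F i (v $ i))"
  show "v = m"
  proof (subst vec_eq_iff, intro allI)
    fix i
    have "F i s \<le> F i (v $ i)" for s
    proof -
      define v' where "v' = (\<chi> k. if k = i then s else v $ k)"
      have "(\<Sum>k\<in>UNIV. F k (v' $ k)) - (\<Sum>k\<in>UNIV. F k (v $ k))
          = (\<Sum>k\<in>UNIV. if k = i then F i s - F i (v $ i) else 0)"
        unfolding sum_subtractf[symmetric] by (intro sum.cong) (auto simp: v'_def)
      then have "(\<Sum>k\<in>UNIV. F k (v' $ k)) - (\<Sum>k\<in>UNIV. F k (v $ k)) = F i s - F i (v $ i)"
        by simp
      then show ?thesis using max[rule_format, of v'] by linarith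
    qed
    then show "v $ i = m $ i" using argmax by blast
  qed
next
  assume "v = m"
  then show "\<forall>v'. (\<Sum>i\<in>UNIV. F i (v' $ i)) \<le> (\<Sum>i\<in>UNIV. F i (v $ i))"
    using argmax by (auto intro!: sum_mono)
qed

lemma joint_argmax_iff_profile_argmax:
  fixes h :: "'a \<Rightarrow> 'b \<Rightarrow> real"
  assumes argmax: "\<And>\<theta> v. \<theta> \<in> S \<Longrightarrow> (\<forall>v'. h \<theta> v' \<le> h \<theta> v) \<longleftrightarrow> v = m \<theta>"
    and profile: "\<And>\<theta>. \<theta> \<in> S \<Longrightarrow> h \<theta> (m \<theta>) = L \<theta>"
    and "\<theta>h \<in> S"
  shows "(\<forall>\<theta>\<in>S. \<forall>v. h \<theta> v \<le> h \<theta>h vh) \<longleftrightarrow> (\<forall>\<theta>\<in>S. L \<theta> \<le> L \<theta>h) \<and> vh = m \<theta>h"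
proof -
  have le_L: "h \<theta> v \<le> L \<theta>" if "\<theta> \<in> S" for \<theta> v
    using argmax[OF that, of "m \<theta>"] profile[OF that] by simp
  show ?thesis
  proof
    assume max: "\<forall>\<theta>\<in>S. \<forall>v. h \<theta> v \<le> h \<theta>h vh"
    then have "vh = m \<theta>h" using argmax[OF \<open>\<theta>h \<in> S\<close>] \<open>\<theta>h \<in> S\<close> by blast
    moreover have "L \<theta> \<le> L \<theta>h" if "\<theta> \<in> S" for \<theta>
      using max that profile[OF that] \<open>vh = m \<theta>h\<close> profile[OF \<open>\<theta>h \<in> S\<close>] by metis
    ultimately show "(\<forall>\<theta>\<in>S. L \<theta> \<le> L \<theta>h) \<and> vh = m \<theta>h" by blast
  next
    assume "(\<forall>\<theta>\<in>S. L \<theta> \<le> L \<theta>h) \<and> vh = m \<theta>h"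
    then show "\<forall>\<theta>\<in>S. \<forall>v. h \<theta> v \<le> h \<theta>h vh"
      using le_L profile[OF \<open>\<theta>h \<in> S\<close>] by (metis order_trans)
  qed
qed

definition post_shape :: "('n \<Rightarrow> nat) \<Rightarrow> ('n \<Rightarrow> nat \<Rightarrow> nat) \<Rightarrow> 'w param \<Rightarrow> 'n \<Rightarrow> real" where
  "post_shape q y \<theta> i = yplus q y i + 1 / snd (snd \<theta>)"

definition post_rate :: "(nat \<Rightarrow> real^'p \<Rightarrow> 'w \<Rightarrow> real) \<Rightarrow> nat \<Rightarrow> ('n \<Rightarrow> nat)
    \<Rightarrow> ('n \<Rightarrow> nat \<Rightarrow> real^'p) \<Rightarrow> 'w param \<Rightarrow> 'n \<Rightarrow> real" where
  "post_rate g pL q xs \<theta> i = mu_plus g pL q xs \<theta> i + 1 / snd (snd \<theta>)"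

definition log_kernel_const :: "(nat \<Rightarrow> real^'p \<Rightarrow> 'w \<Rightarrow> real) \<Rightarrow> nat \<Rightarrow> ('n \<Rightarrow> nat)
    \<Rightarrow> ('n \<Rightarrow> nat \<Rightarrow> nat) \<Rightarrow> ('n \<Rightarrow> nat \<Rightarrow> real^'p) \<Rightarrow> 'w param \<Rightarrow> 'n \<Rightarrow> real" where
  "log_kernel_const g pL q y xs \<theta> i =
     (\<Sum>j<q i. real (y i j) * ln (mu_m g pL xs \<theta> i j) - ln (fact (y i j)))
     - (1 / snd (snd \<theta>)) * ln (snd (snd \<theta>)) - ln (Gamma (1 / snd (snd \<theta>)))"

text \<open>Closed form of \<open>\<integral> exp (s t) exp (ell_e_i t) dt\<close>; at \<open>s = 0\<close> the marginal likelihood of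
  subject \<open>i\<close>.\<close>
definition subject_integral :: "(nat \<Rightarrow> real^'p \<Rightarrow> 'w \<Rightarrow> real) \<Rightarrow> nat \<Rightarrow> ('n \<Rightarrow> nat)
    \<Rightarrow> ('n \<Rightarrow> nat \<Rightarrow> nat) \<Rightarrow> ('n \<Rightarrow> nat \<Rightarrow> real^'p) \<Rightarrow> 'w param \<Rightarrow> 'n \<Rightarrow> real \<Rightarrow> real" where
  "subject_integral g pL q y xs \<theta> i s =
     exp (log_kernel_const g pL q y xs \<theta> i)
     * (Gamma (post_shape q y \<theta> i + s) / post_rate g pL q xs \<theta> i powr (post_shape q y \<theta> i + s))"

lemma ln_poisson_pmf_val:
  "\<mu> > 0 \<Longrightarrow> ln (poisson_pmf_val \<mu> k) = - \<mu> + real k * ln \<mu> - ln (fact k)"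
  unfolding poisson_pmf_val_def by (simp add: ln_mult ln_div ln_realpow)

lemma mu_c_eq: "mu_c g pL xs \<theta> i j t = mu_m g pL xs \<theta> i j * exp t"
  by (cases \<theta>) (simp add: mu_c_def mu_m_def exp_add)

lemma mu_m_pos: "mu_m g pL xs \<theta> i j > 0"
  by (cases \<theta>) (simp add: mu_m_def)

lemma ell_e_i_eq_gamma_kernel:
  "ell_e_i g pL q y xs \<theta> i t =
     post_shape q y \<theta> i * t - post_rate g pL q xs \<theta> i * exp t + log_kernel_const g pL q y xs \<theta> i"
proof -
  have "(\<Sum>j<q i. ln (poisson_pmf_val (mu_c g pL xs \<theta> i j t) (y i j)))
      = (\<Sum>j<q i. real (y i j) * t - mu_m g pL xs \<theta> i j * exp t
           + (real (y i j) * ln (mu_m g pL xs \<theta> i j) - ln (fact (y i j))))"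
    by (intro sum.cong) (auto simp: mu_c_eq mu_m_pos ln_poisson_pmf_val ln_mult algebra_simps
        dual_order.strict_implies_not_eq[OF mu_m_pos])
  also have "\<dots> = yplus q y i * t - mu_plus g pL q xs \<theta> i * exp t
      + (\<Sum>j<q i. real (y i j) * ln (mu_m g pL xs \<theta> i j) - ln (fact (y i j)))"
    by (simp add: sum.distrib sum_subtractf yplus_def mu_plus_def sum_distrib_right)
  finally show ?thesis
    unfolding ell_e_i_def log_f_v_def post_shape_def post_rate_def log_kernel_const_def
    by (simp add: algebra_simps diff_divide_distrib)
qed

lemma ell_e_eq_sum: "ell_e g pL q y xs \<theta> v = (\<Sum>i\<in>UNIV. ell_e_i g pL q y xs \<theta> i (v $ i))"
  unfolding ell_e_def ell_e_i_def by (simp add: sum.distrib)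

lemma vtilde_nth: "vtilde g pL q y xs \<theta> $ i = ln (post_shape q y \<theta> i / post_rate g pL q xs \<theta> i)"
  by (simp add: vtilde_def post_shape_def post_rate_def)

context
  fixes g :: "nat \<Rightarrow> real^'p \<Rightarrow> 'w \<Rightarrow> real" and pL :: nat
    and q :: "'n::finite \<Rightarrow> nat" and y :: "'n \<Rightarrow> nat \<Rightarrow> nat"
    and xs :: "'n \<Rightarrow> nat \<Rightarrow> real^'p" and \<theta> :: "'w param"
  assumes \<theta>: "\<theta> \<in> ParamSpace"
begin

lemma post_shape_pos: "post_shape q y \<theta> i > 0"
  using \<theta> unfolding post_shape_def yplus_def ParamSpace_def by (intro add_nonneg_pos sum_nonneg) auto

lemma post_rate_pos: "post_rate g pL q xs \<theta> i > 0"
  using \<theta> unfolding post_rate_def mu_plus_def ParamSpace_def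
  by (intro add_nonneg_pos sum_nonneg) (auto simp: mu_m_pos less_imp_le)

lemma subject_integral_pos: "s \<ge> 0 \<Longrightarrow> subject_integral g pL q y xs \<theta> i s > 0"
  using post_shape_pos[of i] post_rate_pos[of i] by (simp add: subject_integral_def)

lemma subject_integral_ratio:
  "subject_integral g pL q y xs \<theta> i 1 / subject_integral g pL q y xs \<theta> i 0
     = post_shape q y \<theta> i / post_rate g pL q xs \<theta> i"
proof -
  let ?A = "post_shape q y \<theta> i" and ?B = "post_rate g pL q xs \<theta> i"
  have "Gamma (?A + 1) = ?A * Gamma ?A"
    using post_shape_pos[of i] by (intro Gamma_plus1) auto
  moreover have "?B powr (?A + 1) = ?B powr ?A * ?B"
    using post_rate_pos[of i] by (simp add: powr_add)
  moreover have "Gamma ?A > 0" "?B powr ?A > 0"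
    using post_shape_pos[of i] post_rate_pos[of i] by auto
  ultimately show ?thesis by (simp add: subject_integral_def field_simps)
qed

lemma exp_ell_e_i_measurable [measurable]:
  "(\<lambda>t. exp (s * t) * exp (ell_e_i g pL q y xs \<theta> i t)) \<in> borel_measurable borel"
  unfolding ell_e_i_eq_gamma_kernel by measurable

lemma nn_integral_exp_ell_e_i:
  assumes "s \<ge> 0"
  shows "(\<integral>\<^sup>+t. ennreal (exp (s * t) * exp (ell_e_i g pL q y xs \<theta> i t)) \<partial>lborel)
    = ennreal (subject_integral g pL q y xs \<theta> i s)"
proof -
  let ?A = "post_shape q y \<theta> i" and ?B = "post_rate g pL q xs \<theta> i"
    and ?C = "log_kernel_const g pL q y xs \<theta> i"
  have "(\<integral>\<^sup>+t. ennreal (exp (s * t) * exp (ell_e_i g pL q y xs \<theta> i t)) \<partial>lborel)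
      = (\<integral>\<^sup>+t. ennreal (exp ((?A + s) * t - ?B * exp t)) * ennreal (exp ?C) \<partial>lborel)"
    by (auto simp: ell_e_i_eq_gamma_kernel ennreal_mult[symmetric] exp_add[symmetric] algebra_simps)
  also have "\<dots> = ennreal (Gamma (?A + s) / ?B powr (?A + s)) * ennreal (exp ?C)"
    using post_shape_pos[of i] post_rate_pos[of i] assms
    by (simp add: nn_integral_multc nn_integral_gamma_kernel)
  finally show ?thesis
    using post_shape_pos[of i] post_rate_pos[of i] assms
    by (simp add: subject_integral_def ennreal_mult[symmetric] mult.commute)
qed

lemma integral_exp_ell_e_i:
  "s \<ge> 0 \<Longrightarrow> (\<integral>t. exp (s * t) * exp (ell_e_i g pL q y xs \<theta> i t) \<partial>lborel)
    = subject_integral g pL q y xs \<theta> i s"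
  by (rule integral_eq_if_nn_integral_eq)
     (auto simp: nn_integral_exp_ell_e_i intro: less_imp_le subject_integral_pos)

lemma integral_tilted_exp_ell_e:
  assumes "\<And>i. s i \<ge> 0"
  shows "(\<integral>v. exp (\<Sum>i\<in>UNIV. s i * v $ i) * exp (ell_e g pL q y xs \<theta> v) \<partial>lborel)
    = (\<Prod>i\<in>UNIV. subject_integral g pL q y xs \<theta> i (s i))"
proof -
  have "exp (\<Sum>i\<in>UNIV. s i * v $ i) * exp (ell_e g pL q y xs \<theta> v)
      = (\<Prod>i\<in>UNIV. exp (s i * v $ i) * exp (ell_e_i g pL q y xs \<theta> i (v $ i)))" for v
    by (simp add: ell_e_eq_sum exp_sum prod.distrib)
  then show ?thesis
    using assms by (simp, subst integral_lborel_vec_prod)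
      (auto simp: nn_integral_exp_ell_e_i less_imp_le subject_integral_pos)
qed

lemma integral_exp_ell_e:
  "(\<integral>v. exp (ell_e g pL q y xs \<theta> v) \<partial>lborel) = (\<Prod>i\<in>UNIV. subject_integral g pL q y xs \<theta> i 0)"
  using integral_tilted_exp_ell_e[of "\<lambda>_. 0"] by simp

lemma ln_subject_integral_zero:
  "ln (subject_integral g pL q y xs \<theta> i 0) = log_kernel_const g pL q y xs \<theta> i
     + ln (Gamma (post_shape q y \<theta> i)) - post_shape q y \<theta> i * ln (post_rate g pL q xs \<theta> i)"
  using post_rate_pos[of i] Gamma_real_pos[OF post_shape_pos[of i]]
  by (simp add: subject_integral_def ln_mult ln_div ln_powr)

lemma marg_loglik_eq: "marg_loglik g pL q y xs \<theta> = (\<Sum>i\<in>UNIV. ln (subject_integral g pL q y xs \<theta> i 0))"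
  unfolding marg_loglik_def integral_exp_ell_e
  using subject_integral_pos[of 0] by (simp add: ln_prod less_imp_neq[symmetric])

lemma hlik_vtilde: "hlik g pL q y xs \<theta> (vtilde g pL q y xs \<theta>) = marg_loglik g pL q y xs \<theta>"
proof -
  have "ell_e_i g pL q y xs \<theta> i (vtilde g pL q y xs \<theta> $ i) + c_adj (snd (snd \<theta>)) (yplus q y i)
      = ln (subject_integral g pL q y xs \<theta> i 0)" for i
    using post_shape_pos[of i] post_rate_pos[of i]
    by (simp add: ell_e_i_eq_gamma_kernel vtilde_nth ln_subject_integral_zero c_adj_def
        post_shape_def[symmetric] ln_div exp_diff algebra_simps)
  then show ?thesis
    unfolding hlik_def ell_e_eq_sum marg_loglik_eq by (simp add: sum.distrib[symmetric])
qed

lemma ell_e_i_argmax_iff: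
  "(\<forall>s. ell_e_i g pL q y xs \<theta> i s \<le> ell_e_i g pL q y xs \<theta> i r) \<longleftrightarrow> r = vtilde g pL q y xs \<theta> $ i"
  using gamma_kernel_argmax_iff[OF post_shape_pos post_rate_pos]
  by (simp add: ell_e_i_eq_gamma_kernel vtilde_nth)

lemma hlik_argmax_iff:
  "(\<forall>v'. hlik g pL q y xs \<theta> v' \<le> hlik g pL q y xs \<theta> v) \<longleftrightarrow> v = vtilde g pL q y xs \<theta>"
  unfolding hlik_def ell_e_eq_sum add_le_cancel_right
  by (rule separable_argmax_iff) (rule ell_e_i_argmax_iff)

lemma log_post_argmax_iff:
  "(\<forall>v'. log_post g pL q y xs \<theta> v' \<le> log_post g pL q y xs \<theta> v) \<longleftrightarrow> v = vtilde g pL q y xs \<theta>"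
  unfolding log_post_def ell_e_eq_sum diff_conv_add_uminus add_le_cancel_right
  by (rule separable_argmax_iff) (rule ell_e_i_argmax_iff)

lemma exp_vtilde_nth:
  "exp (vtilde g pL q y xs \<theta> $ i)
     = subject_integral g pL q y xs \<theta> i 1 / subject_integral g pL q y xs \<theta> i 0"
  using subject_integral_ratio[of i] post_shape_pos[of i] post_rate_pos[of i] by (simp add: vtilde_nth)

lemma post_exp_i_exp: "post_exp_i g pL q y xs \<theta> i exp = exp (vtilde g pL q y xs \<theta> $ i)"
  using integral_exp_ell_e_i[of 1 i] integral_exp_ell_e_i[of 0 i]
  by (simp add: post_exp_i_def exp_vtilde_nth)

lemma post_exp_mu_c:
  "post_exp g pL q y xs \<theta> (\<lambda>v. mu_c g pL xs \<theta> i j (v $ i))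
     = exp (vtilde g pL q y xs \<theta> $ i) * mu_m g pL xs \<theta> i j"
proof -
  define e where "e k = (of_bool (k = i) :: real)" for k
  have e_nonneg: "e k \<ge> 0" for k by (simp add: e_def)
  have "mu_c g pL xs \<theta> i j (v $ i) * exp (ell_e g pL q y xs \<theta> v)
      = mu_m g pL xs \<theta> i j * (exp (\<Sum>k\<in>UNIV. e k * v $ k) * exp (ell_e g pL q y xs \<theta> v))" for v
    by (simp add: mu_c_eq e_def)
  then have "post_exp g pL q y xs \<theta> (\<lambda>v. mu_c g pL xs \<theta> i j (v $ i))
      = mu_m g pL xs \<theta> i j * (\<Prod>k\<in>UNIV. subject_integral g pL q y xs \<theta> k (e k))
          / (\<Prod>k\<in>UNIV. subject_integral g pL q y xs \<theta> k 0)"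
    by (simp only: post_exp_def integral_mult_right_zero integral_tilted_exp_ell_e[OF e_nonneg]
        integral_exp_ell_e)
  also have "\<dots> = mu_m g pL xs \<theta> i j * (\<Prod>k\<in>UNIV.
      subject_integral g pL q y xs \<theta> k (e k) / subject_integral g pL q y xs \<theta> k 0)"
    by (simp add: prod_dividef)
  also have "(\<Prod>k\<in>UNIV. subject_integral g pL q y xs \<theta> k (e k) / subject_integral g pL q y xs \<theta> k 0)
      = exp (vtilde g pL q y xs \<theta> $ i)"
  proof -
    have "subject_integral g pL q y xs \<theta> k (e k) / subject_integral g pL q y xs \<theta> k 0
        = (if k = i then exp (vtilde g pL q y xs \<theta> $ i) else 1)" for k
      using subject_integral_pos[of 0 k] by (simp add: e_def exp_vtilde_nth)
    then show ?thesis by simp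
  qed
  finally show ?thesis by simp
qed

end

theorem mainTheorem2:
  fixes g :: "nat \<Rightarrow> real^'p \<Rightarrow> 'w \<Rightarrow> real" and pL :: nat
    and q :: "'n::finite \<Rightarrow> nat" and y :: "'n \<Rightarrow> nat \<Rightarrow> nat"
    and xs :: "'n \<Rightarrow> nat \<Rightarrow> real^'p"
    and w :: 'w and \<beta> :: "nat \<Rightarrow> real" and lam :: real
  assumes "lam > 0"
  shows
    \<comment> \<open>(i)\<close>
    "(\<forall>v::real^'n. (\<forall>v'. hlik g pL q y xs (w, \<beta>, lam) v' \<le> hlik g pL q y xs (w, \<beta>, lam) v)
        \<longleftrightarrow> v = vtilde g pL q y xs (w, \<beta>, lam))
   \<and> (\<forall>v::real^'n. (\<forall>v'. log_post g pL q y xs (w, \<beta>, lam) v' \<le> log_post g pL q y xs (w, \<beta>, lam) v)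
        \<longleftrightarrow> v = vtilde g pL q y xs (w, \<beta>, lam))
   \<comment> \<open>(ii)\<close>
   \<and> hlik g pL q y xs (w, \<beta>, lam) (vtilde g pL q y xs (w, \<beta>, lam)) = marg_loglik g pL q y xs (w, \<beta>, lam)
   \<and> (\<forall>\<theta>h \<in> ParamSpace. \<forall>vh::real^'n.
        (\<forall>\<theta>\<in>ParamSpace. \<forall>v. hlik g pL q y xs \<theta> v \<le> hlik g pL q y xs \<theta>h vh)
        \<longleftrightarrow> ((\<forall>\<theta>\<in>ParamSpace. marg_loglik g pL q y xs \<theta> \<le> marg_loglik g pL q y xs \<theta>h)
             \<and> vh = vtilde g pL q y xs \<theta>h))
   \<comment> \<open>(iii)\<close>
   \<and> (\<forall>i. exp (vtilde g pL q y xs (w, \<beta>, lam) $ i) = post_exp_i g pL q y xs (w, \<beta>, lam) i exp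
        \<and> (\<forall>j < q i. exp (vtilde g pL q y xs (w, \<beta>, lam) $ i) * mu_m g pL xs (w, \<beta>, lam) i j
              = post_exp g pL q y xs (w, \<beta>, lam) (\<lambda>v. mu_c g pL xs (w, \<beta>, lam) i j (v $ i))))"
proof -
  have \<theta>: "(w, \<beta>, lam) \<in> ParamSpace"
    using assms by (simp add: ParamSpace_def)
  have joint: "(\<forall>\<theta>\<in>ParamSpace. \<forall>v. hlik g pL q y xs \<theta> v \<le> hlik g pL q y xs \<theta>h vh)
      \<longleftrightarrow> (\<forall>\<theta>\<in>ParamSpace. marg_loglik g pL q y xs \<theta> \<le> marg_loglik g pL q y xs \<theta>h)
          \<and> vh = vtilde g pL q y xs \<theta>h"
    if "\<theta>h \<in> ParamSpace" for \<theta>h and vh :: "real^'n"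
    by (rule joint_argmax_iff_profile_argmax[OF hlik_argmax_iff hlik_vtilde that])
  show ?thesis
    by (intro conjI allI ballI impI joint hlik_argmax_iff[OF \<theta>] log_post_argmax_iff[OF \<theta>]
        hlik_vtilde[OF \<theta>] post_exp_i_exp[OF \<theta>, symmetric] post_exp_mu_c[OF \<theta>, symmetric])
qed

end
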